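(* Let $m,n\ge0$, $0\le k\le\min(m,n)$, and let $i,j$ be integers with $0\le i\le m$, $0\le j\le n$, $k\le i+j\le m+n-k$. Then $$C_{m,n,k}(i,j)=\frac{\binom{m+n-k}{m-i,\ n-j,\ i+j-k}\;c_{m,n,k}(i,j)}{\binom{m+n-k}{i,\ j,\ m+n-k-i-j}\;D(m,n,k)},\qquad D(m,n,k)=\binom{m+n-k+1}{k}\binom{m+n-2k}{m-k}.$$
   Context: Multinomial coefficients: $\binom{a+b+c}{a,\ b,\ c}=\frac{(a+b+c)!}{a!\,b!\,c!}$. Let $e,f,h$ be the standard basis of $\mathfrak{sl}(2,\mathbb{C})$. $V(n)$ is the irreducible representation of highest weight $n$ with fixed highest weight vector $\phi_n$; $\{f^i\phi_n\}_{0\le i\le n}$ is a basis, $f^{n+1}\phi_n=0$. $\mathfrak{sl}(2)$ acts on $V(m)\otimes V(n)$ by $X(v\otimes w)=Xv\otimes w+v\otimes Xw$. For $0\le k\le\min(m,n)$, $\phi_{m,n,k}=\sum_{l=0}^{k}(-1)^l\binom{m-l}{k-l}\binom{n-k+l}{l} f^l\phi_m\otimes f^{k-l}\phi_n$; it is a highest weight vector of weight $m+n-2k$ generating a copy of $V(m+n-2k)$ with basis $f^a\phi_{m,n,k}$, $0\le a\le m+n-2k$, and $V(m)\otimes V(n)$ is the direct sum of these copies. The coordinates $c_{m,n,k}(i,j)$ are defined by $f^{p-k}\phi_{m,n,k}=\sum_{i+j=p,\,0\le i\le m,\,0\le j\le n} c_{m,n,k}(i,j)\, f^i\phi_m\otimes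 f^j\phi_n$ for $k\le p\le m+n-k$. The Clebsch–Gordan coefficients $C_{m,n,k}(i,j)$ are defined by $f^i\phi_m\otimes f^j\phi_n=\sum_{k} C_{m,n,k}(i,j)\, f^{i+j-k}\phi_{m,n,k}$, sum over $0\le k\le\min(m,n)$ with $k\le i+j\le m+n-k$. *)

theory Defs
  imports Complex_Main
begin

text \<open>Concrete model of V(m) \<otimes> V(n): a vector is a coefficient function
  v :: nat \<Rightarrow> nat \<Rightarrow> complex, where v i j is the coefficient of the basis
  vector f^i phi_m \<otimes> f^j phi_n (only 0 \<le> i \<le> m, 0 \<le> j \<le> n are meaningful).\<close>

type_synonym tvec = "nat \<Rightarrow> nat \<Rightarrow> complex"

text \<open>Action of f on V(m) \<otimes> V(n): f(f^i phi_m \<otimes> f^j phi_n) =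
  f^(i+1) phi_m \<otimes> f^j phi_n + f^i phi_m \<otimes> f^(j+1) phi_n, with f^(m+1) phi_m = 0,
  f^(n+1) phi_n = 0.\<close>
definition f_act :: "nat \<Rightarrow> nat \<Rightarrow> tvec \<Rightarrow> tvec" where
  "f_act m n v = (\<lambda>i j. if i \<le> m \<and> j \<le> n then
      (if 0 < i then v (i - 1) j else 0) + (if 0 < j then v i (j - 1) else 0) else 0)"

definition basis_vec :: "nat \<Rightarrow> nat \<Rightarrow> tvec" where
  "basis_vec i j = (\<lambda>a b. if a = i \<and> b = j then 1 else 0)"

definition phi_mnk :: "nat \<Rightarrow> nat \<Rightarrow> nat \<Rightarrow> tvec" where
  "phi_mnk m n k = (\<lambda>a b. \<Sum>l\<le>k. (-1) ^ l * of_nat ((m - l) choose (k - l))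
       * of_nat ((n - k + l) choose l) * basis_vec l (k - l) a b)"

definition coord_c :: "nat \<Rightarrow> nat \<Rightarrow> nat \<Rightarrow> nat \<Rightarrow> nat \<Rightarrow> complex" where
  "coord_c m n k i j = ((f_act m n ^^ (i + j - k)) (phi_mnk m n k)) i j"

definition adm_k :: "nat \<Rightarrow> nat \<Rightarrow> nat \<Rightarrow> nat set" where
  "adm_k m n p = {k. k \<le> min m n \<and> k \<le> p \<and> p \<le> m + n - k}"

definition CG :: "nat \<Rightarrow> nat \<Rightarrow> nat \<Rightarrow> nat \<Rightarrow> nat \<Rightarrow> complex" where
  "CG m n k i j = (THE C :: nat \<Rightarrow> complex.
      (\<forall>k'. k' \<notin> adm_k m n (i + j) \<longrightarrow> C k' = 0) \<and>
      (\<forall>a b. basis_vec i j a b =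
         (\<Sum>k'\<in>adm_k m n (i + j). C k' * ((f_act m n ^^ (i + j - k')) (phi_mnk m n k')) a b))) k"

definition multinom3 :: "nat \<Rightarrow> nat \<Rightarrow> nat \<Rightarrow> complex" where
  "multinom3 a b c = fact (a + b + c) / (fact a * fact b * fact c)"

definition D_mnk :: "nat \<Rightarrow> nat \<Rightarrow> nat \<Rightarrow> complex" where
  "D_mnk m n k = of_nat ((m + n - k + 1) choose k) * of_nat ((m + n - 2 * k) choose (m - k))"

end

theory Submission
  imports Defs "HOL-Computational_Algebra.Formal_Power_Series" "Jordan_Normal_Form.Determinant"
begin

text \<open>The tensor product carries the contravariant form in which the vectors
  \<open>f\<^sup>i\<phi>\<^sub>m \<otimes> f\<^sup>j\<phi>\<^sub>n\<close> are orthogonal with norms \<open>i!\<^sup>2 (m choose i) j!\<^sup>2 (n choose j)\<close>, and for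
  which \<open>e\<close> is adjoint to \<open>f\<close>. Since \<open>e\<close> kills \<open>\<phi>\<^sub>m\<^sub>,\<^sub>n\<^sub>,\<^sub>k\<close>, the relation \<open>[e, f] = h\<close> shows that
  the vectors \<open>f\<^sup>p\<^sup>-\<^sup>k\<phi>\<^sub>m\<^sub>,\<^sub>n\<^sub>,\<^sub>k\<close> of a fixed weight are pairwise orthogonal, with norm
  \<open>(p-k)!\<^sup>2 (m+n-2k choose p-k)\<close> times the norm of \<open>\<phi>\<^sub>m\<^sub>,\<^sub>n\<^sub>,\<^sub>k\<close>, and the latter is a
  Chu--Vandermonde sum. There are as many of these vectors as basis vectors of that weight, so
  they form an orthogonal basis of the weight space, and \<open>C\<^sub>m\<^sub>,\<^sub>n\<^sub>,\<^sub>k(i,j)\<close> is the projection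
  coefficient \<open>\<langle>f\<^sup>i\<phi>\<^sub>m \<otimes> f\<^sup>j\<phi>\<^sub>n, f\<^sup>p\<^sup>-\<^sup>k\<phi>\<^sub>m\<^sub>,\<^sub>n\<^sub>,\<^sub>k\<rangle> / \<langle>f\<^sup>p\<^sup>-\<^sup>k\<phi>\<^sub>m\<^sub>,\<^sub>n\<^sub>,\<^sub>k, f\<^sup>p\<^sup>-\<^sup>k\<phi>\<^sub>m\<^sub>,\<^sub>n\<^sub>,\<^sub>k\<rangle>\<close>.
  Expanding the factorials gives the formula.\<close>

lemma of_nat_choose_upper_negation:
  "(of_nat ((a + l) choose l) :: 'a::field_char_0) = (-1) ^ l * ((- of_nat a - 1) gchoose l)"
  by (simp add: gbinomial_negated_upper[of "- of_nat a - 1"] binomial_gbinomial add.commute)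

text \<open>Chu--Vandermonde for the negative upper indices \<open>-a-1\<close> and \<open>-b-1\<close>.\<close>
lemma sum_choose_upper_convolution:
  "(\<Sum>l\<le>k. ((a + (k - l)) choose (k - l)) * ((b + l) choose l)) = (a + b + k + 1) choose k"
proof -
  let ?x = "- of_nat a - 1 :: rat" and ?y = "- of_nat b - 1 :: rat"
  have "(of_nat (((a + (k - l)) choose (k - l)) * ((b + l) choose l)) :: rat)
      = (-1) ^ k * ((?y gchoose l) * (?x gchoose (k - l)))" if "l \<le> k" for l
  proof -
    have "(-1 :: rat) ^ (k - l) * (-1) ^ l = (-1) ^ k"
      using that by (simp flip: power_add)
    then show ?thesis
      by (simp only: of_nat_mult of_nat_choose_upper_negation) (simp add: algebra_simps)
  qed
  then have "(of_nat (\<Sum>l\<le>k. ((a + (k - l)) choose (k - l)) * ((b + l) choose l)) :: rat)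
      = (-1) ^ k * (\<Sum>l\<le>k. (?y gchoose l) * (?x gchoose (k - l)))"
    by (simp add: sum_distrib_left)
  also have "\<dots> = (-1) ^ k * ((?y + ?x) gchoose k)"
    using gbinomial_Vandermonde[of ?y ?x k] by (simp add: atLeast0AtMost)
  also have "\<dots> = of_nat ((a + b + 1 + k) choose k)"
  proof -
    have "?y + ?x = - of_nat (a + b + 1) - 1" by simp
    then show ?thesis by (simp only: of_nat_choose_upper_negation)
  qed
  finally show ?thesis by (simp only: of_nat_eq_iff add_ac)
qed

lemma matrix_left_inverse_imp_right_inverse:
  fixes a b :: "nat \<Rightarrow> nat \<Rightarrow> 'a::field"
  assumes "\<And>k k'. k < d \<Longrightarrow> k' < d \<Longrightarrow> (\<Sum>t<d. a k t * b t k') = (if k = k' then 1 else 0)"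
    and "t < d" "t' < d"
  shows "(\<Sum>k<d. b t k * a k t') = (if t = t' then 1 else 0)"
proof -
  define A where "A = mat d d (\<lambda>(k, t). a k t)"
  define B where "B = mat d d (\<lambda>(t, k). b t k)"
  have "A * B = 1\<^sub>m d"
    by (rule eq_matI) (auto simp: A_def B_def scalar_prod_def assms(1) atLeast0LessThan)
  then have "B * A = 1\<^sub>m d"
    by (rule mat_mult_left_right_inverse[rotated 2]) (auto simp: A_def B_def)
  then have "(B * A) $$ (t, t') = 1\<^sub>m d $$ (t, t')" by simp
  then show ?thesis using assms(2,3) by (simp add: A_def B_def scalar_prod_def atLeast0LessThan)
qed

lemma dual_orthogonality:
  fixes a :: "'k \<Rightarrow> 't \<Rightarrow> 'a::field"
  assumes "finite I" "finite K" "card I = card K"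
    and orth: "\<And>k k'. k \<in> K \<Longrightarrow> k' \<in> K \<Longrightarrow>
      (\<Sum>t\<in>I. w t * a k t * a k' t) = (if k = k' then g k else 0)"
    and "\<And>k. k \<in> K \<Longrightarrow> g k \<noteq> 0"
    and "t \<in> I" "t' \<in> I"
  shows "(\<Sum>k\<in>K. w t * a k t * a k t' / g k) = (if t = t' then 1 else 0)"
proof -
  define d where "d = card I"
  obtain hI where hI: "bij_betw hI {..<d} I"
    using ex_bij_betw_nat_finite[OF \<open>finite I\<close>] by (auto simp: d_def atLeast0LessThan)
  obtain hK where hK: "bij_betw hK {..<d} K"
    using ex_bij_betw_nat_finite[OF \<open>finite K\<close>] assms(3) by (auto simp: d_def atLeast0LessThan)
  define b where "b = (\<lambda>t k. w t * a k t / g k)"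
  have inv: "(\<Sum>y<d. a (hK x) (hI y) * b (hI y) (hK x')) = (if x = x' then 1 else 0)"
    if "x < d" "x' < d" for x x'
  proof -
    have K: "hK x \<in> K" "hK x' \<in> K" using hK that by (auto dest: bij_betwE)
    have "(\<Sum>y<d. a (hK x) (hI y) * b (hI y) (hK x')) = (\<Sum>t\<in>I. a (hK x) t * b t (hK x'))"
      by (rule sum.reindex_bij_betw[OF hI])
    also have "\<dots> = (\<Sum>t\<in>I. w t * a (hK x) t * a (hK x') t) / g (hK x')"
      unfolding b_def sum_divide_distrib by (intro sum.cong refl) (simp add: ac_simps)
    also have "\<dots> = (if hK x = hK x' then 1 else 0)"
      using orth[OF K] assms(5)[OF K(2)] by auto
    also have "hK x = hK x' \<longleftrightarrow> x = x'"
      using hK that by (auto simp: bij_betw_def inj_on_def)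
    finally show ?thesis .
  qed
  have "t \<in> hI ` {..<d}" "t' \<in> hI ` {..<d}"
    using bij_betw_imp_surj_on[OF hI] assms(6,7) by auto
  then obtain y y' where y: "y < d" "hI y = t" and y': "y' < d" "hI y' = t'"
    by auto
  have "(\<Sum>k\<in>K. w t * a k t * a k t' / g k) = (\<Sum>k\<in>K. b (hI y) k * a k (hI y'))"
    unfolding b_def y y' by (intro sum.cong refl) (simp add: ac_simps)
  also have "\<dots> = (\<Sum>x<d. b (hI y) (hK x) * a (hK x) (hI y'))"
    by (rule sum.reindex_bij_betw[OF hK, symmetric])
  also have "\<dots> = (if y = y' then 1 else 0)"
    by (rule matrix_left_inverse_imp_right_inverse[OF inv y(1) y'(1)])
  also have "\<dots> = (if t = t' then 1 else 0)"
    using hI y y' by (auto simp: bij_betw_def inj_on_def)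
  finally show ?thesis .
qed

text \<open>The raising operator: \<open>e f\<^sup>i\<^sup>+\<^sup>1\<phi>\<^sub>m = (i + 1)(m - i) f\<^sup>i\<phi>\<^sub>m\<close>.\<close>
definition e_act :: "nat \<Rightarrow> nat \<Rightarrow> tvec \<Rightarrow> tvec" where
  "e_act m n v = (\<lambda>i j. if i \<le> m \<and> j \<le> n then
     (of_nat i + 1) * (of_nat m - of_nat i) * v (Suc i) j
     + (of_nat j + 1) * (of_nat n - of_nat j) * v i (Suc j) else 0)"

definition basis_norm :: "nat \<Rightarrow> nat \<Rightarrow> complex" where
  "basis_norm m i = of_nat (fact i * fact i * (m choose i))"

definition contra_form :: "nat \<Rightarrow> nat \<Rightarrow> tvec \<Rightarrow> tvec \<Rightarrow> complex" where
  "contra_form m n v w = (\<Sum>i\<le>m. \<Sum>j\<le>n. basis_norm m i * basis_norm n j * v i j * w i j)"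

definition homogeneous :: "nat \<Rightarrow> tvec \<Rightarrow> bool" where
  "homogeneous p v \<longleftrightarrow> (\<forall>i j. i + j \<noteq> p \<longrightarrow> v i j = 0)"

definition in_box :: "nat \<Rightarrow> nat \<Rightarrow> tvec \<Rightarrow> bool" where
  "in_box m n v \<longleftrightarrow> (\<forall>i j. m < i \<or> n < j \<longrightarrow> v i j = 0)"

lemma basis_norm_eq_fact: "i \<le> m \<Longrightarrow> basis_norm m i = fact i * fact m / fact (m - i)"
  by (simp add: basis_norm_def binomial_fact)

lemma basis_norm_nonzero: "i \<le> m \<Longrightarrow> basis_norm m i \<noteq> 0"
  by (simp add: basis_norm_eq_fact)

lemma basis_norm_Suc:
  assumes "i < m"
  shows "basis_norm m (Suc i) = (of_nat i + 1) * (of_nat m - of_nat i) * basis_norm m i"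
proof -
  have "m - i = Suc (m - Suc i)" using assms by simp
  then have fact_eq: "(fact (m - i) :: complex) = (of_nat m - of_nat i) * fact (m - Suc i)"
    using assms by (simp add: of_nat_diff)
  have "(of_nat m - of_nat i :: complex) \<noteq> 0" using assms by simp
  then have "basis_norm m (Suc i)
      = (of_nat i + 1) * (of_nat m - of_nat i) * (fact i * fact m / ((of_nat m - of_nat i) * fact (m - Suc i)))"
    using assms by (simp add: basis_norm_eq_fact field_simps)
  then show ?thesis
    using assms by (simp only: fact_eq[symmetric] basis_norm_eq_fact less_imp_le)
qed

lemma f_act_scale: "f_act m n (\<lambda>i j. c * v i j) = (\<lambda>i j. c * f_act m n v i j)"
  by (auto simp: f_act_def fun_eq_iff ring_distribs)

lemma f_act_in_box: "in_box m n (f_act m n v)"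
  by (auto simp: f_act_def in_box_def)

lemma funpow_f_act_in_box: "in_box m n v \<Longrightarrow> in_box m n ((f_act m n ^^ a) v)"
  by (cases a) (simp_all add: f_act_in_box)

lemma f_act_homogeneous: "homogeneous p v \<Longrightarrow> homogeneous (Suc p) (f_act m n v)"
  unfolding homogeneous_def f_act_def by auto

lemma funpow_f_act_homogeneous: "homogeneous p v \<Longrightarrow> homogeneous (p + a) ((f_act m n ^^ a) v)"
  by (induction a) (simp_all add: f_act_homogeneous)

lemma e_act_f_act:
  assumes "in_box m n v" "homogeneous p v"
  shows "e_act m n (f_act m n v) =
    (\<lambda>i j. f_act m n (e_act m n v) i j + (of_nat m + of_nat n - 2 * of_nat p) * v i j)"
proof (intro ext)
  fix i j
  show "e_act m n (f_act m n v) i j =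
     f_act m n (e_act m n v) i j + (of_nat m + of_nat n - 2 * of_nat p) * v i j"
  proof (cases "i \<le> m \<and> j \<le> n")
    case False
    then show ?thesis using assms(1) by (auto simp: e_act_def f_act_def in_box_def)
  next
    case True
    then have im: "i \<le> m" and jn: "j \<le> n" by auto
    have h: "(of_nat m + of_nat n - 2 * of_nat p) * v i j
        = (of_nat m + of_nat n - 2 * of_nat i - 2 * of_nat j) * v i j"
      using assms(2) unfolding homogeneous_def by (cases "i + j = p") auto
    have A: "(of_nat m - of_nat i) * f_act m n v (Suc i) j
        = (of_nat m - of_nat i) * (v i j + (if 0 < j then v (Suc i) (j - 1) else 0))"
      using im jn by (cases "i = m") (auto simp: f_act_def)
    have B: "(of_nat n - of_nat j) * f_act m n v i (Suc j)
        = (of_nat n - of_nat j) * ((if 0 < i then v (i - 1) (Suc j) else 0) + v i j)"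
      using im jn by (cases "j = n") (auto simp: f_act_def)
    have L: "e_act m n (f_act m n v) i j
        = (of_nat i + 1) * ((of_nat m - of_nat i) * f_act m n v (Suc i) j)
          + (of_nat j + 1) * ((of_nat n - of_nat j) * f_act m n v i (Suc j))"
      using im jn by (simp add: e_act_def mult_ac)
    have R: "f_act m n (e_act m n v) i j =
        (if 0 < i then of_nat i * (of_nat m - of_nat (i - 1)) * v i j
           + (of_nat j + 1) * (of_nat n - of_nat j) * v (i - 1) (Suc j) else 0)
      + (if 0 < j then (of_nat i + 1) * (of_nat m - of_nat i) * v (Suc i) (j - 1)
           + of_nat j * (of_nat n - of_nat (j - 1)) * v i j else 0)"
      using im jn by (cases i; cases j) (auto simp: f_act_def e_act_def algebra_simps)
    show ?thesis unfolding L A B R h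
      using im jn by (cases i; cases j) (auto simp: algebra_simps)
  qed
qed

lemma sum_shift_by_weight_ratio:
  fixes W c x y :: "nat \<Rightarrow> complex"
  assumes "\<And>i. i < m \<Longrightarrow> W (Suc i) = c i * W i" "c m = 0"
  shows "(\<Sum>i\<le>m. W i * (if 0 < i then x (i - 1) else 0) * y i)
       = (\<Sum>i\<le>m. W i * x i * (c i * y (Suc i)))"
proof (cases m)
  case 0
  then show ?thesis using assms by simp
next
  case (Suc m')
  have "(\<Sum>i\<le>m. W i * (if 0 < i then x (i - 1) else 0) * y i)
      = (\<Sum>i\<le>m'. W (Suc i) * x i * y (Suc i))"
    unfolding Suc sum.atMost_Suc_shift by simp
  also have "\<dots> = (\<Sum>i\<le>m'. W i * x i * (c i * y (Suc i)))"
    using assms(1) Suc by (intro sum.cong refl) (auto simp: mult_ac)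
  also have "\<dots> = (\<Sum>i\<le>m. W i * x i * (c i * y (Suc i)))"
    using assms(2) Suc by (simp add: sum.atMost_Suc)
  finally show ?thesis .
qed

lemma contra_form_f_act: "contra_form m n (f_act m n v) w = contra_form m n v (e_act m n w)"
proof -
  let ?ci = "\<lambda>i. (of_nat i + 1) * (of_nat m - of_nat i) :: complex"
  let ?cj = "\<lambda>j. (of_nat j + 1) * (of_nat n - of_nat j) :: complex"
  have "contra_form m n (f_act m n v) w =
     (\<Sum>j\<le>n. basis_norm n j * (\<Sum>i\<le>m. basis_norm m i * (if 0 < i then v (i - 1) j else 0) * w i j))
   + (\<Sum>i\<le>m. basis_norm m i * (\<Sum>j\<le>n. basis_norm n j * (if 0 < j then v i (j - 1) else 0) * w i j))"
    unfolding contra_form_def f_act_def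
    by (simp add: sum.swap[of _ "{..m}"] sum_distrib_left sum.distrib[symmetric] algebra_simps)
  also have "\<dots> =
     (\<Sum>j\<le>n. basis_norm n j * (\<Sum>i\<le>m. basis_norm m i * v i j * (?ci i * w (Suc i) j)))
   + (\<Sum>i\<le>m. basis_norm m i * (\<Sum>j\<le>n. basis_norm n j * v i j * (?cj j * w i (Suc j))))"
    by (subst sum_shift_by_weight_ratio[where c = ?ci], simp add: basis_norm_Suc, simp,
        subst sum_shift_by_weight_ratio[where c = ?cj], simp add: basis_norm_Suc, simp, rule refl)
  also have "\<dots> = contra_form m n v (e_act m n w)"
    unfolding contra_form_def e_act_def
    by (simp add: sum.swap[of _ "{..m}"] sum_distrib_left sum.distrib[symmetric] algebra_simps)
  finally show ?thesis .
qed

lemma contra_form_sym: "contra_form m n v w = contra_form m n w v"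
  unfolding contra_form_def by (simp add: mult_ac)

lemma contra_form_scale_right:
  "contra_form m n v (\<lambda>i j. c * w i j) = c * contra_form m n v w"
  unfolding contra_form_def by (simp add: sum_distrib_left mult_ac)

lemma contra_form_zero_right: "contra_form m n v (\<lambda>i j. 0) = 0"
  unfolding contra_form_def by simp

lemma contra_form_sum_left:
  assumes "finite K"
  shows "contra_form m n (\<lambda>a b. \<Sum>k\<in>K. C k * V k a b) w = (\<Sum>k\<in>K. C k * contra_form m n (V k) w)"
  unfolding contra_form_def
  by (simp add: sum_distrib_left sum_distrib_right sum.swap[of _ K] mult_ac)

lemma contra_form_basis_vec:
  assumes "i \<le> m" "j \<le> n"
  shows "contra_form m n (basis_vec i j) w = basis_norm m i * basis_norm n j * w i j"
proof -
  have "contra_form m n (basis_vec i j) w = (\<Sum>a\<le>m. \<Sum>b\<le>n.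
      if a = i then (if b = j then basis_norm m i * basis_norm n j * w i j else 0) else 0)"
    unfolding contra_form_def basis_vec_def by (rule sum.cong[OF refl], rule sum.cong[OF refl]) auto
  also have "\<dots> = (\<Sum>a\<le>m. if a = i then basis_norm m i * basis_norm n j * w i j else 0)"
    using assms by (intro sum.cong refl) (simp add: sum.delta')
  finally show ?thesis using assms by (simp add: sum.delta')
qed

text \<open>The basis vectors \<open>f\<^sup>i\<phi>\<^sub>m \<otimes> f\<^sup>p\<^sup>-\<^sup>i\<phi>\<^sub>n\<close> of weight \<open>m + n - 2p\<close> are indexed by these \<open>i\<close>.\<close>
definition weight_space_idx :: "nat \<Rightarrow> nat \<Rightarrow> nat \<Rightarrow> nat set" where
  "weight_space_idx m n p = {i. i \<le> m \<and> i \<le> p \<and> p - i \<le> n}"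

lemma finite_weight_space_idx: "finite (weight_space_idx m n p)"
  unfolding weight_space_idx_def by (rule finite_subset[of _ "{..m}"]) auto

lemma finite_adm_k: "finite (adm_k m n p)"
  unfolding adm_k_def by (rule finite_subset[of _ "{..m}"]) auto

lemma card_weight_space_idx:
  assumes "p \<le> m + n"
  shows "card (weight_space_idx m n p) = card (adm_k m n p)"
proof -
  have "weight_space_idx m n p = {p - min p n .. min m p}"
    unfolding weight_space_idx_def by auto
  moreover have "adm_k m n p = {.. min (min m n) (min p (m + n - p))}"
    unfolding adm_k_def using assms by auto
  ultimately show ?thesis using assms by (simp add: min_def; arith)
qed

lemma contra_form_homogeneous:
  assumes "homogeneous p v"
  shows "contra_form m n v w = (\<Sum>i\<in>weight_space_idx m n p.
    basis_norm m i * basis_norm n (p - i) * v i (p - i) * w i (p - i))"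
proof -
  have "contra_form m n v w = (\<Sum>i\<le>m. if i \<le> p \<and> p - i \<le> n
      then basis_norm m i * basis_norm n (p - i) * v i (p - i) * w i (p - i) else 0)"
    unfolding contra_form_def
  proof (intro sum.cong refl)
    fix i
    have "(\<Sum>j\<le>n. basis_norm m i * basis_norm n j * v i j * w i j)
        = (\<Sum>j\<le>n. if j = p - i then (if i \<le> p then basis_norm m i * basis_norm n j * v i j * w i j else 0) else 0)"
      using assms unfolding homogeneous_def by (intro sum.cong refl) auto
    then show "(\<Sum>j\<le>n. basis_norm m i * basis_norm n j * v i j * w i j) = (if i \<le> p \<and> p - i \<le> n
      then basis_norm m i * basis_norm n (p - i) * v i (p - i) * w i (p - i) else 0)"
      by (simp add: sum.delta)
  qed
  also have "\<dots> = (\<Sum>i\<in>{i\<in>{..m}. i \<le> p \<and> p - i \<le> n}.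
      basis_norm m i * basis_norm n (p - i) * v i (p - i) * w i (p - i))"
    by (subst sum.inter_filter) auto
  also have "{i\<in>{..m}. i \<le> p \<and> p - i \<le> n} = weight_space_idx m n p"
    unfolding weight_space_idx_def by auto
  finally show ?thesis .
qed

lemma e_act_funpow_f_act:
  assumes "in_box m n v" "homogeneous d v" "e_act m n v = (\<lambda>i j. 0)"
  shows "e_act m n ((f_act m n ^^ Suc a) v) = (\<lambda>i j.
    of_nat (Suc a) * (of_nat m + of_nat n - 2 * of_nat d - of_nat a) * (f_act m n ^^ a) v i j)"
proof (induction a)
  case 0
  show ?case using e_act_f_act[OF assms(1,2)] assms(3) by (simp add: f_act_def fun_eq_iff)
next
  case (Suc a)
  have "e_act m n ((f_act m n ^^ Suc (Suc a)) v) = e_act m n (f_act m n ((f_act m n ^^ Suc a) v))"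
    by simp
  also have "\<dots> = (\<lambda>i j. f_act m n (e_act m n ((f_act m n ^^ Suc a) v)) i j
       + (of_nat m + of_nat n - 2 * of_nat (d + Suc a)) * (f_act m n ^^ Suc a) v i j)"
    using assms by (intro e_act_f_act funpow_f_act_in_box funpow_f_act_homogeneous)
  also have "\<dots> = (\<lambda>i j. of_nat (Suc (Suc a)) * (of_nat m + of_nat n - 2 * of_nat d - of_nat (Suc a))
       * (f_act m n ^^ Suc a) v i j)"
    unfolding Suc f_act_scale by (simp add: fun_eq_iff algebra_simps)
  finally show ?case .
qed

lemma contra_form_funpow_f_act_self:
  assumes "in_box m n v" "homogeneous d v" "e_act m n v = (\<lambda>i j. 0)" "a \<le> m + n - 2 * d"
    and "2 * d \<le> m + n"
  shows "contra_form m n ((f_act m n ^^ a) v) ((f_act m n ^^ a) v)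
    = basis_norm (m + n - 2 * d) a * contra_form m n v v"
  using assms(4)
proof (induction a)
  case 0
  then show ?case by (simp add: basis_norm_def)
next
  case (Suc a)
  have "contra_form m n ((f_act m n ^^ Suc a) v) ((f_act m n ^^ Suc a) v)
      = contra_form m n ((f_act m n ^^ a) v) (e_act m n ((f_act m n ^^ Suc a) v))"
    by (simp add: contra_form_f_act)
  also have "\<dots> = of_nat (Suc a) * (of_nat m + of_nat n - 2 * of_nat d - of_nat a)
      * contra_form m n ((f_act m n ^^ a) v) ((f_act m n ^^ a) v)"
    by (simp only: e_act_funpow_f_act[OF assms(1-3)] contra_form_scale_right)
  also have "\<dots> = basis_norm (m + n - 2 * d) (Suc a) * contra_form m n v v"
  proof -
    have "(of_nat m + of_nat n - 2 * of_nat d :: complex) = of_nat (m + n - 2 * d)"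
      using assms(5) by (simp add: of_nat_diff)
    then show ?thesis using Suc by (simp add: basis_norm_Suc algebra_simps)
  qed
  finally show ?case .
qed

lemma contra_form_funpow_f_act_orthogonal:
  assumes "in_box m n w" "homogeneous d w" "e_act m n w = (\<lambda>i j. 0)" "b < a"
  shows "contra_form m n ((f_act m n ^^ a) v) ((f_act m n ^^ b) w) = 0"
  using assms(4)
proof (induction b arbitrary: a)
  case 0
  then obtain a' where "a = Suc a'" by (cases a) auto
  then show ?case by (simp add: contra_form_f_act assms(3) contra_form_zero_right)
next
  case (Suc b)
  then obtain a' where a: "a = Suc a'" and "b < a'" by (cases a) auto
  have "contra_form m n ((f_act m n ^^ a) v) ((f_act m n ^^ Suc b) w)
     = contra_form m n ((f_act m n ^^ a') v) (e_act m n ((f_act m n ^^ Suc b) w))"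
    unfolding a by (simp add: contra_form_f_act)
  also have "\<dots> = 0"
    by (simp only: e_act_funpow_f_act[OF assms(1-3)] contra_form_scale_right
        Suc.IH[OF \<open>b < a'\<close>] mult_zero_right)
  finally show ?case .
qed

definition phi_coeff :: "nat \<Rightarrow> nat \<Rightarrow> nat \<Rightarrow> nat \<Rightarrow> complex" where
  "phi_coeff m n k l = (-1) ^ l * of_nat ((m - l) choose (k - l)) * of_nat ((n - k + l) choose l)"

lemma phi_mnk_eq: "phi_mnk m n k a b = (if a \<le> k \<and> b = k - a then phi_coeff m n k a else 0)"
proof -
  have "phi_mnk m n k a b = (\<Sum>l\<le>k. if l = a then (if b = k - a then phi_coeff m n k l else 0) else 0)"
    unfolding phi_mnk_def basis_vec_def phi_coeff_def by (intro sum.cong refl) auto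
  then show ?thesis by (simp add: sum.delta)
qed

lemma phi_mnk_in_box: "k \<le> m \<Longrightarrow> k \<le> n \<Longrightarrow> in_box m n (phi_mnk m n k)"
  unfolding in_box_def phi_mnk_eq by auto

lemma phi_mnk_homogeneous: "homogeneous k (phi_mnk m n k)"
  unfolding homogeneous_def phi_mnk_eq by auto

lemma phi_coeff_ratio:
  assumes "i < k" "k \<le> m"
  shows "Suc i * (m - i) * ((m - Suc i) choose (k - Suc i)) * ((n - k + Suc i) choose Suc i)
       = (k - i) * (n - k + Suc i) * ((m - i) choose (k - i)) * ((n - k + i) choose i)"
proof -
  have "(m - i) * ((m - Suc i) choose (k - Suc i)) = (k - i) * ((m - i) choose (k - i))"
    using Suc_times_binomial_eq[of "m - Suc i" "k - Suc i"] assms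
    by (simp add: Suc_diff_Suc le_less_trans)
  moreover have "Suc i * ((n - k + Suc i) choose Suc i) = (n - k + Suc i) * ((n - k + i) choose i)"
    using Suc_times_binomial[of i "n - k + i"] by simp
  ultimately show ?thesis by (metis mult.assoc mult.left_commute)
qed

lemma e_act_phi_mnk:
  assumes "k \<le> m" "k \<le> n"
  shows "e_act m n (phi_mnk m n k) = (\<lambda>i j. 0)"
proof (intro ext)
  fix i j
  show "e_act m n (phi_mnk m n k) i j = 0"
  proof (cases "i \<le> m \<and> j \<le> n \<and> Suc (i + j) = k")
    case False
    then show ?thesis unfolding e_act_def phi_mnk_eq by auto
  next
    case True
    then have "i < k" "i \<le> m" "Suc j = k - i" "n - j = n - k + Suc i" using assms by auto
    have c1: "(of_nat i + 1) * (of_nat m - of_nat i) = (of_nat (Suc i * (m - i)) :: complex)"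
      by (simp only: of_nat_mult of_nat_Suc of_nat_diff[OF \<open>i \<le> m\<close>]) (simp add: algebra_simps)
    have c2: "(of_nat j + 1) * (of_nat n - of_nat j) = (of_nat ((k - i) * (n - k + Suc i)) :: complex)"
    proof -
      have "(of_nat ((k - i) * (n - k + Suc i)) :: complex) = of_nat (Suc j) * of_nat (n - j)"
        by (simp only: of_nat_mult \<open>Suc j = k - i\<close> \<open>n - j = n - k + Suc i\<close>)
      then show ?thesis using True by (simp add: of_nat_diff)
    qed
    have p: "phi_coeff m n k (Suc i) = - ((-1) ^ i * of_nat ((m - Suc i) choose (k - Suc i))
        * of_nat ((n - k + Suc i) choose Suc i))"
      unfolding phi_coeff_def power_Suc by simp
    have "e_act m n (phi_mnk m n k) i j = (of_nat i + 1) * (of_nat m - of_nat i) * phi_coeff m n k (Suc i)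
        + (of_nat j + 1) * (of_nat n - of_nat j) * phi_coeff m n k i"
      using True unfolding e_act_def phi_mnk_eq by auto
    also have "\<dots> = (-1) ^ i * (of_nat ((k - i) * (n - k + Suc i) * ((m - i) choose (k - i))
          * ((n - k + i) choose i))
        - of_nat (Suc i * (m - i) * ((m - Suc i) choose (k - Suc i)) * ((n - k + Suc i) choose Suc i)))"
      unfolding c1 c2 p by (simp only: of_nat_mult phi_coeff_def) (simp add: algebra_simps)
    also have "\<dots> = 0"
      by (simp only: phi_coeff_ratio[OF \<open>i < k\<close> assms(1)] diff_self mult_zero_right)
    finally show ?thesis .
  qed
qed

lemma contra_form_phi_mnk_self:
  assumes "k \<le> m" "k \<le> n"
  shows "contra_form m n (phi_mnk m n k) (phi_mnk m n k)
    = fact m * fact n * of_nat ((m + n - k + 1) choose k) / (fact (m - k) * fact (n - k))"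
proof -
  define X where "X l = (m - l) choose (k - l)" for l
  define Y where "Y l = (n - k + l) choose l" for l
  have summand: "basis_norm m l * basis_norm n (k - l) * phi_coeff m n k l * phi_coeff m n k l
      = fact m * fact n / (fact (m - k) * fact (n - k)) * of_nat (X l * Y l)" if "l \<le> k" for l
  proof -
    have A: "basis_norm m l * of_nat (X l) = fact l * fact m / (fact (k - l) * fact (m - k))"
      using that assms by (simp add: X_def basis_norm_eq_fact binomial_fact)
    have B: "basis_norm n (k - l) * of_nat (Y l) = fact (k - l) * fact n / (fact l * fact (n - k))"
      using that assms by (simp add: Y_def basis_norm_eq_fact binomial_fact Nat.diff_diff_right)
    have "phi_coeff m n k l * phi_coeff m n k l = of_nat (X l) * of_nat (Y l) * of_nat (X l * Y l)"
      unfolding phi_coeff_def X_def Y_def by (simp add: algebra_simps power_mult_distrib[symmetric])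
    then have "basis_norm m l * basis_norm n (k - l) * phi_coeff m n k l * phi_coeff m n k l
        = (basis_norm m l * of_nat (X l)) * (basis_norm n (k - l) * of_nat (Y l)) * of_nat (X l * Y l)"
      by (simp only: mult_ac)
    also have "\<dots> = fact m * fact n / (fact (m - k) * fact (n - k)) * of_nat (X l * Y l)"
      unfolding A B by (simp add: field_simps)
    finally show ?thesis .
  qed
  have "weight_space_idx m n k = {..k}"
    unfolding weight_space_idx_def using assms by auto
  then have "contra_form m n (phi_mnk m n k) (phi_mnk m n k)
      = (\<Sum>l\<le>k. basis_norm m l * basis_norm n (k - l) * phi_coeff m n k l * phi_coeff m n k l)"
    by (simp add: contra_form_homogeneous[OF phi_mnk_homogeneous] phi_mnk_eq)
  also have "\<dots> = fact m * fact n / (fact (m - k) * fact (n - k)) * of_nat (\<Sum>l\<le>k. X l * Y l)"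
    by (simp add: summand sum_distrib_left)
  also have "(\<Sum>l\<le>k. X l * Y l) = (m + n - k + 1) choose k"
  proof -
    have "(\<Sum>l\<le>k. X l * Y l) = (\<Sum>l\<le>k. ((m - k + (k - l)) choose (k - l)) * ((n - k + l) choose l))"
      using assms by (intro sum.cong refl) (simp add: X_def Y_def)
    also have "\<dots> = (m - k + (n - k) + k + 1) choose k"
      by (rule sum_choose_upper_convolution)
    finally show ?thesis using assms by simp
  qed
  finally show ?thesis by simp
qed

definition cg_vec :: "nat \<Rightarrow> nat \<Rightarrow> nat \<Rightarrow> nat \<Rightarrow> tvec" where
  "cg_vec m n p k = (f_act m n ^^ (p - k)) (phi_mnk m n k)"

lemma cg_vec_homogeneous:
  assumes "k \<in> adm_k m n p"
  shows "homogeneous p (cg_vec m n p k)"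
proof -
  have "homogeneous (k + (p - k)) (cg_vec m n p k)"
    unfolding cg_vec_def by (rule funpow_f_act_homogeneous[OF phi_mnk_homogeneous])
  then show ?thesis using assms by (simp add: adm_k_def)
qed

lemma cg_vec_in_box: "k \<in> adm_k m n p \<Longrightarrow> in_box m n (cg_vec m n p k)"
  unfolding cg_vec_def adm_k_def by (intro funpow_f_act_in_box phi_mnk_in_box) auto

lemma contra_form_cg_vec:
  assumes "k \<in> adm_k m n p" "k' \<in> adm_k m n p"
  shows "contra_form m n (cg_vec m n p k) (cg_vec m n p k') = (if k = k' then
    basis_norm (m + n - 2 * k) (p - k) * contra_form m n (phi_mnk m n k) (phi_mnk m n k) else 0)"
proof -
  have orth: "contra_form m n (cg_vec m n p k) (cg_vec m n p k') = 0"
    if "k \<in> adm_k m n p" "k' \<in> adm_k m n p" "k < k'" for k k'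
  proof -
    have "k' \<le> m" "k' \<le> n" "p - k' < p - k" using that unfolding adm_k_def by auto
    then show ?thesis unfolding cg_vec_def
      by (intro contra_form_funpow_f_act_orthogonal[OF phi_mnk_in_box phi_mnk_homogeneous e_act_phi_mnk])
  qed
  have "k \<le> m" "k \<le> n" "p - k \<le> m + n - 2 * k" "2 * k \<le> m + n"
    using assms(1) unfolding adm_k_def by auto
  then have "contra_form m n (cg_vec m n p k) (cg_vec m n p k)
      = basis_norm (m + n - 2 * k) (p - k) * contra_form m n (phi_mnk m n k) (phi_mnk m n k)"
    unfolding cg_vec_def
    by (intro contra_form_funpow_f_act_self[OF phi_mnk_in_box phi_mnk_homogeneous e_act_phi_mnk])
  moreover have "k \<noteq> k' \<Longrightarrow> contra_form m n (cg_vec m n p k) (cg_vec m n p k') = 0"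
    using orth[OF assms] orth[OF assms(2,1)] contra_form_sym by (metis linorder_neqE_nat)
  ultimately show ?thesis by auto
qed

lemma cg_vec_norm_nonzero:
  assumes "k \<in> adm_k m n p"
  shows "contra_form m n (cg_vec m n p k) (cg_vec m n p k) \<noteq> 0"
proof -
  have "k \<le> m" "k \<le> n" "p - k \<le> m + n - 2 * k" using assms unfolding adm_k_def by auto
  moreover have "k \<le> m + n - k + 1" using \<open>k \<le> m\<close> \<open>k \<le> n\<close> by linarith
  then have "(m + n - k + 1) choose k \<noteq> 0" by simp
  ultimately show ?thesis
    using assms by (simp add: contra_form_cg_vec contra_form_phi_mnk_self basis_norm_nonzero)
qed

lemma basis_vec_expansion:
  assumes "i \<le> m" "j \<le> n"
  defines "p \<equiv> i + j"
  shows "basis_vec i j = (\<lambda>a b. \<Sum>k\<in>adm_k m n p.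
    basis_norm m i * basis_norm n j * cg_vec m n p k i j
      / contra_form m n (cg_vec m n p k) (cg_vec m n p k) * cg_vec m n p k a b)"
proof (intro ext)
  fix a b
  let ?K = "adm_k m n p" and ?I = "weight_space_idx m n p"
  let ?w = "\<lambda>t. basis_norm m t * basis_norm n (p - t)" and ?x = "\<lambda>k t. cg_vec m n p k t (p - t)"
  let ?g = "\<lambda>k. contra_form m n (cg_vec m n p k) (cg_vec m n p k)"
  show "basis_vec i j a b = (\<Sum>k\<in>?K. basis_norm m i * basis_norm n j * cg_vec m n p k i j / ?g k
      * cg_vec m n p k a b)"
  proof (cases "a + b = p \<and> a \<in> ?I")
    case True
    have "i \<in> ?I" using assms unfolding weight_space_idx_def by auto
    have "(\<Sum>k\<in>?K. ?w i * ?x k i * ?x k a / ?g k) = (if i = a then 1 else 0)"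
    proof (rule dual_orthogonality[OF finite_weight_space_idx finite_adm_k])
      show "card ?I = card ?K" using assms by (simp add: card_weight_space_idx)
      show "(\<Sum>t\<in>?I. ?w t * ?x k t * ?x k' t) = (if k = k' then ?g k else 0)"
        if "k \<in> ?K" "k' \<in> ?K" for k k'
      proof -
        have "(\<Sum>t\<in>?I. ?w t * ?x k t * ?x k' t) = contra_form m n (cg_vec m n p k) (cg_vec m n p k')"
          by (simp add: contra_form_homogeneous[OF cg_vec_homogeneous[OF that(1)]])
        then show ?thesis using contra_form_cg_vec[OF that] by auto
      qed
    qed (use \<open>i \<in> ?I\<close> True cg_vec_norm_nonzero in auto)
    moreover have "b = p - a" using True by auto
    ultimately show ?thesis
      using True by (auto simp: basis_vec_def p_def mult_ac)
  next
    case False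
    then have "a + b \<noteq> p \<or> m < a \<or> n < b" unfolding weight_space_idx_def by auto
    then have "cg_vec m n p k a b = 0" if "k \<in> ?K" for k
      using cg_vec_homogeneous[OF that] cg_vec_in_box[OF that]
      unfolding homogeneous_def in_box_def by auto
    moreover have "basis_vec i j a b = 0"
      using \<open>a + b \<noteq> p \<or> m < a \<or> n < b\<close> assms unfolding basis_vec_def by auto
    ultimately show ?thesis by simp
  qed
qed

lemma expansion_coeff_unique:
  assumes "i \<le> m" "j \<le> n" "k \<in> adm_k m n (i + j)"
    and "basis_vec i j = (\<lambda>a b. \<Sum>k'\<in>adm_k m n (i + j). C k' * cg_vec m n (i + j) k' a b)"
  shows "C k = basis_norm m i * basis_norm n j * cg_vec m n (i + j) k i j
    / contra_form m n (cg_vec m n (i + j) k) (cg_vec m n (i + j) k)"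
proof -
  let ?v = "cg_vec m n (i + j)"
  have "basis_norm m i * basis_norm n j * ?v k i j = contra_form m n (basis_vec i j) (?v k)"
    using assms(1,2) by (simp add: contra_form_basis_vec)
  also have "\<dots> = (\<Sum>k'\<in>adm_k m n (i + j). C k' * contra_form m n (?v k') (?v k))"
    unfolding assms(4) by (rule contra_form_sum_left[OF finite_adm_k])
  also have "\<dots> = C k * contra_form m n (?v k) (?v k)"
    using assms(3) by (simp add: contra_form_cg_vec finite_adm_k if_distrib cong: if_cong)
  finally show ?thesis
    using cg_vec_norm_nonzero[OF assms(3)] by (simp add: field_simps)
qed

lemma CG_eq_projection:
  assumes "i \<le> m" "j \<le> n" "k \<in> adm_k m n (i + j)"
  shows "CG m n k i j = basis_norm m i * basis_norm n j * coord_c m n k i j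
    / contra_form m n (cg_vec m n (i + j) k) (cg_vec m n (i + j) k)"
proof -
  let ?v = "cg_vec m n (i + j)"
  define C where "C k' = (if k' \<in> adm_k m n (i + j) then basis_norm m i * basis_norm n j * ?v k' i j
    / contra_form m n (?v k') (?v k') else 0)" for k'
  let ?P = "\<lambda>C :: nat \<Rightarrow> complex. (\<forall>k'. k' \<notin> adm_k m n (i + j) \<longrightarrow> C k' = 0) \<and>
    (\<forall>a b. basis_vec i j a b = (\<Sum>k'\<in>adm_k m n (i + j). C k' * ?v k' a b))"
  have "?P C"
    using basis_vec_expansion[OF assms(1,2)] by (simp add: C_def fun_eq_iff)
  moreover have "C' = C" if "?P C'" for C'
  proof
    fix k'
    show "C' k' = C k'"
      using that expansion_coeff_unique[OF assms(1,2), of k' C'] by (auto simp: C_def fun_eq_iff)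
  qed
  ultimately have "(THE C. ?P C) = C" by (rule the_equality)
  then show ?thesis
    using assms(3) by (simp add: CG_def C_def coord_c_def cg_vec_def)
qed

lemma projection_factor_eq_multinomial_ratio:
  assumes "k \<le> min m n" "i \<le> m" "j \<le> n" "k \<le> i + j" "i + j \<le> m + n - k"
  shows "basis_norm m i * basis_norm n j / (basis_norm (m + n - 2 * k) (i + j - k)
      * (fact m * fact n * of_nat ((m + n - k + 1) choose k) / (fact (m - k) * fact (n - k))))
    = multinom3 (m - i) (n - j) (i + j - k) / (multinom3 i j (m + n - k - i - j) * D_mnk m n k)"
proof -
  define M where "M = m + n - 2 * k"
  define a where "a = i + j - k"
  define q where "q = m + n - k - i - j"
  define T where "T = m + n - k"
  have "a \<le> M" "M - a = q" "m - i + (n - j) + a = T" "i + j + q = T" "M - (m - k) = n - k" "m - k \<le> M"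
    using assms by (auto simp: M_def a_def q_def T_def)
  then have norm: "basis_norm M a = fact a * fact M / fact q"
    and multinom_top: "multinom3 (m - i) (n - j) a = fact T / (fact (m - i) * fact (n - j) * fact a)"
    and multinom_bot: "multinom3 i j q = fact T / (fact i * fact j * fact q)"
    and D: "D_mnk m n k = of_nat ((m + n - k + 1) choose k) * (fact M / (fact (m - k) * fact (n - k)))"
    by (simp_all add: basis_norm_eq_fact multinom3_def D_mnk_def M_def binomial_fact)
  have "k \<le> m + n - k + 1" using assms by linarith
  then have "(m + n - k + 1) choose k \<noteq> 0" by simp
  then show ?thesis
    unfolding M_def[symmetric] a_def[symmetric] q_def[symmetric] norm multinom_top multinom_bot D
      basis_norm_eq_fact[OF assms(2)] basis_norm_eq_fact[OF assms(3)]
    by (simp add: field_simps)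
qed

theorem corollary8p5:
  fixes m n k i j :: nat
  assumes "k \<le> min m n" and "i \<le> m" and "j \<le> n"
    and "k \<le> i + j" and "i + j \<le> m + n - k"
  shows "CG m n k i j =
    multinom3 (m - i) (n - j) (i + j - k) * coord_c m n k i j
      / (multinom3 i j (m + n - k - i - j) * D_mnk m n k)"
proof -
  have k: "k \<in> adm_k m n (i + j)" using assms by (simp add: adm_k_def)
  define N where "N = basis_norm (m + n - 2 * k) (i + j - k)
    * (fact m * fact n * of_nat ((m + n - k + 1) choose k) / (fact (m - k) * fact (n - k)))"
  have "contra_form m n (cg_vec m n (i + j) k) (cg_vec m n (i + j) k) = N"
    using assms by (simp add: N_def contra_form_cg_vec[OF k k] contra_form_phi_mnk_self)
  then have "CG m n k i j = basis_norm m i * basis_norm n j / N * coord_c m n k i j"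
    by (simp only: CG_eq_projection[OF assms(2,3) k] times_divide_eq_left)
  also have "\<dots> = multinom3 (m - i) (n - j) (i + j - k)
      / (multinom3 i j (m + n - k - i - j) * D_mnk m n k) * coord_c m n k i j"
    unfolding N_def by (simp only: projection_factor_eq_multinomial_ratio[OF assms])
  finally show ?thesis by (simp only: times_divide_eq_left)
qed

end
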